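(* Let $G=(V,E,w)$ be a connected undirected graph with positive edge weights, let $v\in V$, let $E_v$ be a set of node pairs $\{u,v\}$ with $u\neq v$ and $\{u,v\}\notin E$, each $e\in E_v$ having a given positive weight $w(e)$, and let $k\le |E_v|$ be a positive integer. For $S\subseteq E_v$ let $\mathcal{R}(S)$ be the resistance distance of $v$ in $G(S)$. Consider the greedy procedure: start with $S=\emptyset$; for $i=1,\dots,k$, choose $e_i\in E_v\setminus S$ maximizing $\mathcal{R}(S)-\mathcal{R}(S\cup\{e\})$ over $e\in E_v\setminus S$ (ties broken arbitrarily) and set $S\leftarrow S\cup\{e_i\}$. Then the returned set $S$ (with $|S|=k$) satisfies $$\mathcal{R}(\emptyset)-\mathcal{R}(S)\ge\left(1-\frac{1}{e}\right)\left(\mathcal{R}(\emptyset)-\mathcal{R}(S^* )\right),$$ where $S^*$ is a minimizer of $\mathcal{R}(S')$ over all $S'\subseteq E_v$ with $|S'|=k$, and $e$ in $1-\frac1e$ is Euler's number.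
   Context: For a connected weighted graph $H$ on node set $V$, its Laplacian is $\mathbf{L}=\mathbf{D}-\mathbf{A}$ ($\mathbf{A}$ weighted adjacency matrix, $\mathbf{D}$ diagonal weighted degree matrix), with Moore–Penrose pseudoinverse $\mathbf{L}^\dagger$. The resistance distance between nodes $a,b$ is $\mathcal{R}_{ab}=(\mathbf{e}_a-\mathbf{e}_b)^\top\mathbf{L}^\dagger(\mathbf{e}_a-\mathbf{e}_b)$, and the resistance distance of node $v$ is $\mathcal{R}_v=\sum_{u\in V}\mathcal{R}_{uv}$. For $S\subseteq E_v$, $G(S)=(V,E\cup S,w')$ is the graph obtained from $G$ by adding the edges of $S$ with their given weights. *)

theory Defs
  imports "HOL-Analysis.Analysis"
begin

text \<open>Vertices form a finite type 'n. A weighted undirected graph is given by a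
symmetric weight function w, with an edge {a,b} present iff w a b > 0.\<close>

definition weighted_graph :: "('n \<Rightarrow> 'n \<Rightarrow> real) \<Rightarrow> bool" where
  "weighted_graph w \<longleftrightarrow> (\<forall>a b. w a b = w b a) \<and> (\<forall>a. w a a = 0) \<and> (\<forall>a b. w a b \<ge> 0)"

definition edges :: "('n \<Rightarrow> 'n \<Rightarrow> real) \<Rightarrow> 'n set set" where
  "edges w = {{a, b} | a b. w a b > 0}"

definition connected_graph :: "('n \<Rightarrow> 'n \<Rightarrow> real) \<Rightarrow> bool" where
  "connected_graph w \<longleftrightarrow> (\<forall>a b. (a, b) \<in> ({(x, y). w x y > 0})\<^sup>*)"

definition weighted_adj :: "('n::finite \<Rightarrow> 'n \<Rightarrow> real) \<Rightarrow> real^'n^'n" where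
  "weighted_adj w = (\<chi> i j. w i j)"

definition degree_mat :: "('n::finite \<Rightarrow> 'n \<Rightarrow> real) \<Rightarrow> real^'n^'n" where
  "degree_mat w = (\<chi> i j. if i = j then (\<Sum>k\<in>UNIV. w i k) else 0)"

definition laplacian :: "('n::finite \<Rightarrow> 'n \<Rightarrow> real) \<Rightarrow> real^'n^'n" where
  "laplacian w = degree_mat w - weighted_adj w"

definition is_pinv :: "real^'n::finite^'n \<Rightarrow> real^'n^'n \<Rightarrow> bool" where
  "is_pinv A X \<longleftrightarrow> A ** X ** A = A \<and> X ** A ** X = X \<and>
     transpose (A ** X) = A ** X \<and> transpose (X ** A) = X ** A"

definition pinv :: "real^'n::finite^'n \<Rightarrow> real^'n^'n" where
  "pinv A = (THE X. is_pinv A X)"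

definition unit_vec :: "'n::finite \<Rightarrow> real^'n" where
  "unit_vec a = (\<chi> i. if i = a then 1 else 0)"

definition resistance :: "('n::finite \<Rightarrow> 'n \<Rightarrow> real) \<Rightarrow> 'n \<Rightarrow> 'n \<Rightarrow> real" where
  "resistance w a b = (unit_vec a - unit_vec b) \<bullet> (pinv (laplacian w) *v (unit_vec a - unit_vec b))"

definition node_resistance :: "('n::finite \<Rightarrow> 'n \<Rightarrow> real) \<Rightarrow> 'n \<Rightarrow> real" where
  "node_resistance w v = (\<Sum>u\<in>UNIV. resistance w u v)"

definition add_edges :: "('n \<Rightarrow> 'n \<Rightarrow> real) \<Rightarrow> ('n set \<Rightarrow> real) \<Rightarrow> 'n set set \<Rightarrow> ('n \<Rightarrow> 'n \<Rightarrow> real)" where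
  "add_edges w we S = (\<lambda>a b. w a b + (if a \<noteq> b \<and> {a, b} \<in> S then we {a, b} else 0))"

definition greedy_run :: "('n set set \<Rightarrow> real) \<Rightarrow> 'n set set \<Rightarrow> nat \<Rightarrow> 'n set list \<Rightarrow> bool" where
  "greedy_run R Ev k es \<longleftrightarrow> length es = k \<and>
     (\<forall>i<k. es ! i \<in> Ev - set (take i es) \<and>
        (\<forall>e \<in> Ev - set (take i es).
           R (set (take i es)) - R (set (take i es) \<union> {e})
             \<le> R (set (take i es)) - R (set (take i es) \<union> {es ! i})))"

end

theory Submission
  imports Defs
begin

(* Let M_S be the Laplacian of G(S) grounded at v and X_S its inverse. Then R(S) is the trace
   of X_S over the nodes u <> v, and adding the edge {u, v} of weight c adds c e_u e_u^T to
   M_S, so that X_S - X_(S+e) = c X_S e_u e_u^T X_(S+e). A discrete minimum principle shows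
   that every X_S is entrywise nonnegative. Hence the entries of X_S only decrease as edges
   are added, and the gain R(S) - R(S+e) = c sum_i (X_S)_iu (X_(S+e))_ui is nonnegative and
   decreasing in S. Thus S |-> R({}) - R(S) is monotone and submodular, and the greedy
   analysis of Nemhauser, Wolsey and Fisher yields the factor 1 - (1 - 1/k)^k >= 1 - 1/e. *)

lemma is_pinv_unique:
  fixes A X Y :: "real^'n::finite^'n"
  assumes "is_pinv A X" "is_pinv A Y"
  shows "X = Y"
proof -
  have x1: "A ** X ** A = A" and x2: "X ** A ** X = X" and x3: "transpose (A ** X) = A ** X"
    and x4: "transpose (X ** A) = X ** A" using assms(1) unfolding is_pinv_def by auto
  have y1: "A ** Y ** A = A" and y2: "Y ** A ** Y = Y" and y3: "transpose (A ** Y) = A ** Y"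
    and y4: "transpose (Y ** A) = Y ** A" using assms(2) unfolding is_pinv_def by auto
  have "X = X ** transpose (A ** X)" using x2 x3 by (simp add: matrix_mul_assoc)
  also have "\<dots> = X ** transpose (A ** Y ** A ** X)" using y1 by simp
  also have "\<dots> = X ** (A ** X ** (A ** Y))"
    using x3 y3 by (simp add: matrix_transpose_mul matrix_mul_assoc)
  also have "\<dots> = X ** A ** Y" using x1 by (simp add: matrix_mul_assoc)
  finally have X: "X = X ** A ** Y" .
  have "Y = transpose (Y ** A) ** Y" using y2 y4 by (simp add: matrix_mul_assoc)
  also have "\<dots> = transpose (Y ** A ** X ** A) ** Y" by (metis x1 matrix_mul_assoc)
  also have "\<dots> = X ** A ** (Y ** A ** Y)"
    using x4 y4 by (simp add: matrix_transpose_mul matrix_mul_assoc)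
  also have "\<dots> = X ** A ** Y" using y2 by simp
  finally show ?thesis using X by simp
qed

lemma pinv_eqI: "is_pinv A X \<Longrightarrow> pinv A = X"
  unfolding pinv_def using is_pinv_unique by blast

lemma matrix_inv_right: "invertible A \<Longrightarrow> A ** matrix_inv A = mat 1"
  unfolding invertible_def matrix_inv_def by (rule someI_ex[THEN conjunct1])

lemma matrix_inv_left: "invertible A \<Longrightarrow> matrix_inv A ** A = mat 1"
  unfolding invertible_def matrix_inv_def by (rule someI_ex[THEN conjunct2])

lemma matrix_inverse_symmetric:
  fixes A B :: "'a::comm_semiring_1^'n^'n"
  assumes "transpose A = A" "A ** B = mat 1"
  shows "transpose B = B"
proof -
  have "transpose B ** A = mat 1"
    using assms by (metis matrix_transpose_mul transpose_mat)
  then show ?thesis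
    using assms(2) by (metis matrix_mul_assoc matrix_mul_lid matrix_mul_rid)
qed

lemma matrix_diff_ldistrib: "(A::'a::ring_1^'m^'n) ** (B - C) = A ** B - A ** C"
  by (simp add: matrix_matrix_mult_def vec_eq_iff sum_subtractf right_diff_distrib)

lemma matrix_diff_rdistrib: "((A::'a::ring_1^'m^'n) - B) ** C = A ** C - B ** C"
  by (simp add: matrix_matrix_mult_def vec_eq_iff sum_subtractf left_diff_distrib)

lemma transpose_diff: "transpose ((A::'a::ab_group_add^'n^'m) - B) = transpose A - transpose B"
  by (simp add: vec_eq_iff transpose_def)

lemma laplacian_nth: "laplacian w $ i $ j = (if i = j then (\<Sum>k\<in>UNIV. w i k) else 0) - w i j"
  by (simp add: laplacian_def degree_mat_def weighted_adj_def)

section \<open>The grounded Laplacian\<close>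

text \<open>Deleting row and column v gives the grounded Laplacian L_{-v} of the paper; the
  inverse of this matrix is the inverse of L_{-v} bordered by a unit entry at (v, v).\<close>

definition grounded_laplacian :: "('n::finite \<Rightarrow> 'n \<Rightarrow> real) \<Rightarrow> 'n \<Rightarrow> real^'n^'n" where
  "grounded_laplacian w v =
     (\<chi> i j. if i = v \<or> j = v then (if i = j then 1 else 0) else laplacian w $ i $ j)"

lemma grounded_laplacian_mulv_ground: "(grounded_laplacian w v *v x) $ v = x $ v"
proof -
  have "(grounded_laplacian w v *v x) $ v = (\<Sum>j\<in>UNIV. if j = v then x $ j else 0)"
    unfolding matrix_vector_mult_def vec_lambda_beta
    by (intro sum.cong) (auto simp: grounded_laplacian_def)
  then show ?thesis by simp
qed

lemma grounded_laplacian_mulv: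
  assumes "i \<noteq> v"
  shows "(grounded_laplacian w v *v x) $ i =
           (\<Sum>k\<in>UNIV. w i k * (x $ i - (if k = v then 0 else x $ k)))"
proof -
  have "(grounded_laplacian w v *v x) $ i =
          (\<Sum>j\<in>UNIV. (if i = j then (\<Sum>k\<in>UNIV. w i k) * x $ j else 0)
                      - w i j * (if j = v then 0 else x $ j))"
    unfolding matrix_vector_mult_def vec_lambda_beta using assms
    by (intro sum.cong) (auto simp: grounded_laplacian_def laplacian_nth algebra_simps)
  also have "\<dots> = (\<Sum>k\<in>UNIV. w i k * (x $ i - (if k = v then 0 else x $ k)))"
    by (simp add: sum_subtractf sum_distrib_right right_diff_distrib)
  finally show ?thesis .
qed

lemma grounded_laplacian_min_propagates:
  assumes nonneg: "\<forall>a b. 0 \<le> w a b"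
    and super: "\<forall>i. 0 \<le> (grounded_laplacian w v *v x) $ i"
    and min: "\<forall>k. x $ j \<le> x $ k" and neg: "x $ j < 0" and edge: "0 < w j k"
  shows "x $ k = x $ j"
proof -
  have "j \<noteq> v"
    using super grounded_laplacian_mulv_ground[of w v x] neg by (metis not_le)
  define t where "t k = w j k * ((if k = v then 0 else x $ k) - x $ j)" for k
  have t_nonneg: "0 \<le> t k" for k
    using nonneg min neg by (auto simp: t_def)
  have "(\<Sum>k\<in>UNIV. t k) = - (grounded_laplacian w v *v x) $ j"
    using grounded_laplacian_mulv[OF \<open>j \<noteq> v\<close>, of w x]
    by (simp add: t_def sum_negf[symmetric] algebra_simps)
  also have "\<dots> \<le> 0" using super by simp
  finally have "t k = 0"
    using sum_nonneg_eq_0_iff[of UNIV t] t_nonneg by (simp add: order_antisym sum_nonneg)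
  then show ?thesis using edge neg by (auto simp: t_def split: if_splits)
qed

text \<open>Discrete minimum principle: a negative minimum of x would spread along edges
  to the ground node v, where x equals the nonnegative entry v of the product.\<close>

lemma grounded_laplacian_mulv_nonneg_imp_nonneg:
  assumes conn: "connected_graph w" and nonneg: "\<forall>a b. 0 \<le> w a b"
    and super: "\<forall>i. 0 \<le> (grounded_laplacian w v *v x) $ i"
  shows "0 \<le> x $ i"
proof (rule ccontr)
  assume "\<not> 0 \<le> x $ i"
  obtain j where min: "\<forall>k. x $ j \<le> x $ k"
    using ex_min_if_finite[of "range (($) x)"] by (auto simp: not_less)
  with \<open>\<not> 0 \<le> x $ i\<close> have neg: "x $ j < 0" by (meson le_less_trans not_le)
  have "(j, v) \<in> {(a, b). 0 < w a b}\<^sup>*" using conn unfolding connected_graph_def by blast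
  then have "x $ v = x $ j"
  proof (induction rule: rtrancl_induct)
    case (step a b)
    then have a_min: "\<forall>k. x $ a \<le> x $ k" and a_neg: "x $ a < 0"
      using min neg by simp_all
    have "x $ b = x $ a"
      using grounded_laplacian_min_propagates[OF nonneg super a_min a_neg] step.hyps(2) by simp
    with step.IH show ?case by simp
  qed simp
  then show False
    using super grounded_laplacian_mulv_ground[of w v x] neg by (metis not_le)
qed

lemma invertible_grounded_laplacian:
  assumes conn: "connected_graph w" and nonneg: "\<forall>a b. 0 \<le> w a b"
  shows "invertible (grounded_laplacian w v)"
proof -
  have "x = 0" if "grounded_laplacian w v *v x = 0" for x
  proof -
    have "grounded_laplacian w v *v (- x) = - (grounded_laplacian w v *v x)"
      by (metis diff_0 matrix_vector_mult_diff_distrib matrix_vector_mult_0_right)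
    then have "0 \<le> x $ i \<and> 0 \<le> (- x) $ i" for i
      using that
      by (intro conjI grounded_laplacian_mulv_nonneg_imp_nonneg[OF conn nonneg, where v = v])
        simp_all
    then show ?thesis by (simp add: vec_eq_iff order_antisym)
  qed
  then show ?thesis
    unfolding invertible_left_inverse matrix_left_invertible_ker by blast
qed

lemma grounded_laplacian_inverse_nonneg:
  assumes conn: "connected_graph w" and nonneg: "\<forall>a b. 0 \<le> w a b"
  shows "0 \<le> matrix_inv (grounded_laplacian w v) $ i $ j"
proof -
  let ?M = "grounded_laplacian w v"
  have "?M *v (matrix_inv ?M *v axis j 1) = axis j 1"
    using matrix_inv_right[OF invertible_grounded_laplacian[OF conn nonneg]]
    by (simp add: matrix_vector_mul_assoc)
  then have "0 \<le> (matrix_inv ?M *v axis j 1) $ i"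
    by (intro grounded_laplacian_mulv_nonneg_imp_nonneg[OF conn nonneg, where v = v])
      (simp add: axis_def)
  then show ?thesis by (simp add: matrix_vector_mult_basis column_def)
qed

lemma grounded_laplacian_ground_row:
  "grounded_laplacian w v $ v $ k = (if k = v then 1 else 0)"
  by (simp add: grounded_laplacian_def)

lemma grounded_laplacian_inverse_ground_row:
  assumes "invertible (grounded_laplacian w v)"
  shows "matrix_inv (grounded_laplacian w v) $ v $ j = (if j = v then 1 else 0)"
proof -
  let ?M = "grounded_laplacian w v"
  have "(?M ** matrix_inv ?M) $ v $ j
          = (\<Sum>k\<in>UNIV. if k = v then matrix_inv ?M $ k $ j else 0)"
    unfolding matrix_matrix_mult_def vec_lambda_beta
    by (intro sum.cong) (simp_all add: grounded_laplacian_ground_row)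
  then show ?thesis using matrix_inv_right[OF assms] by (auto simp: mat_def)
qed

section \<open>Resistance distance via the grounded Laplacian\<close>

lemma laplacian_row_sum: "(\<Sum>j\<in>UNIV. laplacian w $ i $ j) = 0"
  by (simp add: laplacian_nth sum_subtractf)

lemma laplacian_col_sum:
  assumes "\<And>a b. w a b = w b a"
  shows "(\<Sum>i\<in>UNIV. laplacian w $ i $ j) = 0"
  by (simp add: laplacian_nth sum_subtractf assms)

lemma laplacian_transpose:
  assumes "\<And>a b. w a b = w b a"
  shows "transpose (laplacian w) = laplacian w"
  by (simp add: vec_eq_iff transpose_def laplacian_nth assms)

lemma grounded_laplacian_transpose:
  assumes "\<And>a b. w a b = w b a"
  shows "transpose (grounded_laplacian w v) = grounded_laplacian w v"
  by (auto simp: vec_eq_iff transpose_def grounded_laplacian_def laplacian_nth assms)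

lemma laplacian_mulv_sum:
  assumes "\<And>a b. w a b = w b a"
  shows "(\<Sum>i\<in>UNIV. (laplacian w *v x) $ i) = 0"
proof -
  have "(\<Sum>i\<in>UNIV. (laplacian w *v x) $ i)
          = (\<Sum>j\<in>UNIV. (\<Sum>i\<in>UNIV. laplacian w $ i $ j) * x $ j)"
    unfolding matrix_vector_mult_def vec_lambda_beta sum_distrib_right by (rule sum.swap)
  then show ?thesis by (simp add: laplacian_col_sum assms)
qed

lemma laplacian_mulv_eq_grounded:
  assumes "x $ v = 0" "i \<noteq> v"
  shows "(laplacian w *v x) $ i = (grounded_laplacian w v *v x) $ i"
  unfolding matrix_vector_mult_def vec_lambda_beta
  using assms by (intro sum.cong) (auto simp: grounded_laplacian_def)

definition grounded_inverse :: "('n::finite \<Rightarrow> 'n \<Rightarrow> real) \<Rightarrow> 'n \<Rightarrow> real^'n^'n" where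
  "grounded_inverse w v =
     (\<chi> i j. if i = v \<or> j = v then 0 else matrix_inv (grounded_laplacian w v) $ i $ j)"

text \<open>Off row v this is the identity M X = 1 for the grounded Laplacian M and its inverse X;
  row v follows from it because the columns of the Laplacian sum to zero.\<close>

lemma laplacian_mult_grounded_inverse:
  assumes sym: "\<And>a b. w a b = w b a" and inv: "invertible (grounded_laplacian w v)"
  shows "laplacian w ** grounded_inverse w v = mat 1 - (\<chi> i j. if i = v then 1 else 0)"
proof -
  let ?M = "grounded_laplacian w v" and ?L = "laplacian w"
  have "(?L *v column j (grounded_inverse w v)) $ i
          = (if i = j then 1 else 0) - (if i = v then 1 else 0)" for i j
  proof (cases "j = v")
    case True
    then have "column j (grounded_inverse w v) = 0"
      by (simp add: vec_eq_iff column_def grounded_inverse_def)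
    with True show ?thesis by simp
  next
    case False
    let ?h = "column j (grounded_inverse w v)" and ?c = "column j (matrix_inv ?M)"
    have "?h = ?c" and "?c $ v = 0"
      using False grounded_laplacian_inverse_ground_row[OF inv]
      by (simp_all add: vec_eq_iff column_def grounded_inverse_def)
    moreover have "?M *v ?c = axis j 1"
      by (simp add: matrix_vector_mult_basis[symmetric] matrix_vector_mul_assoc
          matrix_inv_right[OF inv])
    ultimately have off_ground: "(?L *v ?h) $ i = (if i = j then 1 else 0)" if "i \<noteq> v" for i
      using laplacian_mulv_eq_grounded[of ?c v i w] that by (simp add: axis_def)
    show ?thesis
    proof (cases "i = v")
      case True
      have "(\<Sum>i\<in>UNIV. (?L *v ?h) $ i) = 0" by (rule laplacian_mulv_sum[OF sym])
      then have "(?L *v ?h) $ v = - (\<Sum>i\<in>UNIV - {v}. (?L *v ?h) $ i)"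
        by (simp add: sum.remove[of UNIV v])
      also have "\<dots> = - (\<Sum>i\<in>UNIV - {v}. if i = j then 1 else 0)"
        using off_ground by simp
      finally show ?thesis using True False by simp
    qed (use False off_ground in simp)
  qed
  then show ?thesis
    by (simp add: vec_eq_iff matrix_matrix_mult_def matrix_vector_mult_def column_def mat_def)
qed

definition centering :: "real^'n::finite^'n" where
  "centering = (\<chi> i j. of_bool (i = j) - 1 / real CARD('n))"

lemma centering_col_sum: "(\<Sum>i\<in>UNIV. (centering :: real^'n::finite^'n) $ i $ j) = 0"
  by (simp add: centering_def sum_subtractf)

lemma centering_transpose: "transpose centering = centering"
  by (simp add: vec_eq_iff transpose_def centering_def)

lemma mult_centering:
  assumes "\<And>i. (\<Sum>j\<in>UNIV. A $ i $ j) = 0"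
  shows "A ** centering = A"
  using assms
  by (simp add: vec_eq_iff matrix_matrix_mult_def centering_def right_diff_distrib sum_subtractf
      sum_distrib_left mult.commute sum_divide_distrib[symmetric])

lemma centering_mult:
  assumes "\<And>j. (\<Sum>i\<in>UNIV. A $ i $ j) = 0"
  shows "centering ** A = A"
  using assms
  by (simp add: vec_eq_iff matrix_matrix_mult_def centering_def left_diff_distrib sum_subtractf
      sum_distrib_left sum_divide_distrib[symmetric])

lemma centering_mulv:
  assumes "(\<Sum>i\<in>UNIV. d $ i) = 0"
  shows "centering *v d = d"
  using assms
  by (simp add: vec_eq_iff matrix_vector_mult_def centering_def left_diff_distrib sum_subtractf
      sum_distrib_left sum_divide_distrib[symmetric])

text \<open>With the centering projection P, the identity L H = 1 - e_v 1^T of the previous lemma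
  gives L (P H P) = P = (P H P) L, and the Penrose conditions follow.\<close>

lemma pinv_laplacian:
  fixes w :: "'n::finite \<Rightarrow> 'n \<Rightarrow> real"
  assumes sym: "\<And>a b. w a b = w b a" and inv: "invertible (grounded_laplacian w v)"
  shows "pinv (laplacian w) = centering ** grounded_inverse w v ** centering"
proof (rule pinv_eqI)
  let ?L = "laplacian w" and ?H = "grounded_inverse w v" and ?P = "centering :: real^'n^'n"
  define E :: "real^'n^'n" where "E = (\<chi> i j. if i = v then 1 else 0)"
  have LP: "?L ** ?P = ?L" by (rule mult_centering) (rule laplacian_row_sum)
  have PL: "?P ** ?L = ?L" by (rule centering_mult) (rule laplacian_col_sum[OF sym])
  have PP: "?P ** ?P = ?P" by (rule centering_mult) (rule centering_col_sum)
  have EP: "E ** ?P = 0"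
    by (simp add: vec_eq_iff matrix_matrix_mult_def E_def if_distrib centering_col_sum
        cong: if_cong)
  have "transpose (matrix_inv (grounded_laplacian w v)) = matrix_inv (grounded_laplacian w v)"
    by (rule matrix_inverse_symmetric[OF grounded_laplacian_transpose[OF sym]
          matrix_inv_right[OF inv]])
  then have H_sym: "transpose ?H = ?H"
    by (simp add: vec_eq_iff transpose_def grounded_inverse_def)
  have LH: "?L ** ?H = mat 1 - E"
    unfolding E_def by (rule laplacian_mult_grounded_inverse[OF sym inv])
  have "?H ** ?L = transpose (?L ** ?H)"
    by (simp add: matrix_transpose_mul H_sym laplacian_transpose[OF sym])
  then have HL: "?H ** ?L = mat 1 - transpose E" by (simp add: LH transpose_diff)
  have "?P ** transpose E = transpose (E ** ?P)"
    by (simp add: matrix_transpose_mul centering_transpose)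
  then have PE: "?P ** transpose E = 0" by (simp add: EP transpose_def vec_eq_iff)
  have "?L ** (?P ** ?H ** ?P) = (?L ** ?P) ** ?H ** ?P" by (simp add: matrix_mul_assoc)
  also have "\<dots> = ?P" by (simp add: LP LH EP matrix_diff_rdistrib)
  finally have LY: "?L ** (?P ** ?H ** ?P) = ?P" .
  have "?P ** ?H ** ?P ** ?L = ?P ** (?H ** (?P ** ?L))" by (simp add: matrix_mul_assoc)
  also have "\<dots> = ?P" by (simp add: PL HL PE matrix_diff_ldistrib)
  finally have YL: "?P ** ?H ** ?P ** ?L = ?P" .
  show "is_pinv ?L (?P ** ?H ** ?P)"
    unfolding is_pinv_def
    using LY YL PL PP centering_transpose by (simp add: matrix_mul_assoc)
qed

lemma inner_unit_vec_diff_mulv: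
  "(unit_vec a - unit_vec b) \<bullet> (A *v (unit_vec a - unit_vec b))
     = A $ a $ a - A $ a $ b - A $ b $ a + A $ b $ b"
proof -
  have axis: "unit_vec c = axis c 1" for c by (simp add: unit_vec_def axis_def)
  show ?thesis
    unfolding axis
    by (simp add: matrix_vector_mult_diff_distrib inner_diff_left inner_diff_right inner_axis'
        matrix_vector_mult_basis column_def)
qed

lemma resistance_eq_grounded_inverse:
  fixes w :: "'n::finite \<Rightarrow> 'n \<Rightarrow> real"
  assumes sym: "\<And>a b. w a b = w b a" and inv: "invertible (grounded_laplacian w v)"
    and "u \<noteq> v"
  shows "resistance w u v = matrix_inv (grounded_laplacian w v) $ u $ u"
proof -
  let ?H = "grounded_inverse w v" and ?P = "centering :: real^'n^'n"
  define d where "d = unit_vec u - unit_vec v"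
  have "(\<Sum>i\<in>UNIV. d $ i) = 0" by (simp add: d_def unit_vec_def sum_subtractf)
  then have Pd: "?P *v d = d" and dP: "d v* ?P = d"
    using centering_mulv centering_transpose by (metis transpose_matrix_vector)+
  have "resistance w u v = d \<bullet> (?P *v (?H *v (?P *v d)))"
    unfolding resistance_def pinv_laplacian[OF sym inv] d_def
    by (simp add: matrix_vector_mul_assoc matrix_mul_assoc)
  also have "\<dots> = d \<bullet> (?H *v d)" by (metis Pd dP dot_lmul_matrix)
  also have "\<dots> = ?H $ u $ u - ?H $ u $ v - ?H $ v $ u + ?H $ v $ v"
    unfolding d_def by (rule inner_unit_vec_diff_mulv)
  finally show ?thesis using \<open>u \<noteq> v\<close> by (simp add: grounded_inverse_def)
qed

lemma node_resistance_eq_grounded_trace: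
  assumes sym: "\<And>a b. w a b = w b a" and inv: "invertible (grounded_laplacian w v)"
  shows "node_resistance w v = (\<Sum>u\<in>UNIV - {v}. matrix_inv (grounded_laplacian w v) $ u $ u)"
proof -
  have "node_resistance w v = (\<Sum>u\<in>UNIV - {v}. resistance w u v)"
    unfolding node_resistance_def by (simp add: sum.remove[of UNIV v] resistance_def)
  also have "\<dots> = (\<Sum>u\<in>UNIV - {v}. matrix_inv (grounded_laplacian w v) $ u $ u)"
    by (intro sum.cong refl resistance_eq_grounded_inverse[OF sym inv]) simp
  finally show ?thesis .
qed

definition diag_unit_mat :: "'n::finite \<Rightarrow> real^'n^'n" where
  "diag_unit_mat u = (\<chi> i j. if i = u \<and> j = u then 1 else 0)"

lemma inverse_diff_diag_unit_update:
  fixes A B XA XB :: "real^'n::finite^'n"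
  assumes "XA ** A = mat 1" "B ** XB = mat 1" "B = A + c *\<^sub>R diag_unit_mat u"
  shows "XA $ i $ j - XB $ i $ j = c * XA $ i $ u * XB $ u $ j"
proof -
  have "XA ** (B - A) ** XB = XA ** (B ** XB) - (XA ** A) ** XB"
    by (simp add: matrix_diff_ldistrib matrix_diff_rdistrib matrix_mul_assoc)
  then have "XA - XB = XA ** (c *\<^sub>R diag_unit_mat u) ** XB" using assms by simp
  then have "XA $ i $ j - XB $ i $ j = (XA ** (c *\<^sub>R diag_unit_mat u) ** XB) $ i $ j"
    by (metis vector_minus_component)
  also have "\<dots> = (\<Sum>k\<in>UNIV. (\<Sum>l\<in>UNIV. XA $ i $ l * (if l = u \<and> k = u then c else 0))
                              * XB $ k $ j)"
    by (simp add: matrix_matrix_mult_def diag_unit_mat_def if_distrib cong: if_cong)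
  also have "\<dots> = (\<Sum>k\<in>UNIV. (if k = u then c * XA $ i $ u * XB $ k $ j else 0))"
    by (intro sum.cong) (auto simp: if_distrib cong: if_cong)
  finally show ?thesis by simp
qed

lemma add_edges_empty [simp]: "add_edges w we {} = w"
  by (simp add: add_edges_def)

lemma add_edges_insert:
  assumes "e \<notin> S"
  shows "add_edges w we (insert e S) =
           (\<lambda>a b. add_edges w we S a b + (if a \<noteq> b \<and> {a, b} = e then we e else 0))"
  using assms by (auto simp: add_edges_def fun_eq_iff)

lemma weighted_graph_add_edges:
  assumes "weighted_graph w" "\<forall>e\<in>S. 0 \<le> we e"
  shows "weighted_graph (add_edges w we S)"
  using assms unfolding weighted_graph_def add_edges_def by (auto simp: insert_commute)

lemma connected_graph_add_edges:
  assumes "connected_graph w" "\<forall>e\<in>S. 0 \<le> we e"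
  shows "connected_graph (add_edges w we S)"
proof -
  have "{(a, b). 0 < w a b} \<subseteq> {(a, b). 0 < add_edges w we S a b}"
    using assms(2) unfolding add_edges_def by (auto intro: add_pos_nonneg)
  then show ?thesis using assms(1) unfolding connected_graph_def by (meson rtrancl_mono subsetD)
qed

lemma grounded_laplacian_add_ground_edge:
  fixes w :: "'n::finite \<Rightarrow> 'n \<Rightarrow> real" and c :: real
  assumes "u \<noteq> v"
  defines "w' \<equiv> \<lambda>a b. w a b + (if a \<noteq> b \<and> {a, b} = {u, v} then c else 0)"
  shows "grounded_laplacian w' v = grounded_laplacian w v + c *\<^sub>R diag_unit_mat u"
proof -
  have row_sum: "(\<Sum>k\<in>UNIV. w' i k) = (\<Sum>k\<in>UNIV. w i k) + (if i = u then c else 0)"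
    if "i \<noteq> v" for i
  proof -
    have "(\<Sum>k\<in>UNIV. w' i k - w i k) = (\<Sum>k\<in>UNIV. if i = u \<and> k = v then c else 0)"
      using that assms(1) by (intro sum.cong) (auto simp: w'_def doubleton_eq_iff)
    then show ?thesis by (simp add: sum_subtractf algebra_simps)
  qed
  have "grounded_laplacian w' v $ i $ j = (grounded_laplacian w v + c *\<^sub>R diag_unit_mat u) $ i $ j"
    for i j
  proof (cases "i = v \<or> j = v")
    case True
    then show ?thesis using assms(1) by (auto simp: grounded_laplacian_def diag_unit_mat_def)
  next
    case False
    then have "w' i j = w i j" by (auto simp: w'_def doubleton_eq_iff)
    then show ?thesis
      using False row_sum[of i] by (auto simp: grounded_laplacian_def laplacian_nth diag_unit_mat_def)
  qed
  then show ?thesis by (simp add: vec_eq_iff)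
qed

section \<open>The greedy bound\<close>

lemma le_power_mult_of_step_le:
  fixes a :: "nat \<Rightarrow> 'a::linordered_semidom"
  assumes step: "\<And>i. i < n \<Longrightarrow> a (Suc i) \<le> q * a i" and "0 \<le> q"
  shows "a n \<le> q ^ n * a 0"
proof -
  have "a i \<le> q ^ i * a 0" if "i \<le> n" for i
    using that
  proof (induction i)
    case (Suc i)
    then have "a (Suc i) \<le> q * a i" by (intro step) simp
    also have "\<dots> \<le> q * (q ^ i * a 0)" using Suc \<open>0 \<le> q\<close> by (intro mult_left_mono) simp_all
    finally show ?case by (simp add: mult.assoc)
  qed simp
  then show ?thesis by simp
qed

lemma greedy_run_take_Suc:
  assumes "greedy_run f U k es" "i < k"
  shows "set (take (Suc i) es) = insert (es ! i) (set (take i es))"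
  using assms by (simp add: greedy_run_def take_Suc_conv_app_nth)

lemma greedy_run_distinct:
  assumes "greedy_run f U k es"
  shows "distinct es"
proof -
  have "distinct (take i es)" if "i \<le> k" for i
    using that
  proof (induction i)
    case (Suc i)
    then show ?case using assms by (auto simp: greedy_run_def take_Suc_conv_app_nth)
  qed simp
  from this[of k] show ?thesis using assms by (simp add: greedy_run_def)
qed

lemma greedy_run_subset:
  assumes "greedy_run f U k es"
  shows "set es \<subseteq> U"
  using assms by (auto simp: greedy_run_def in_set_conv_nth)

text \<open>The gain f {} - f S of a function in this locale is monotone and submodular: the
  setting of the greedy bound of Nemhauser, Wolsey and Fisher.\<close>

locale decreasing_supermodular =
  fixes U :: "'a set set" and f :: "'a set set \<Rightarrow> real"
  assumes finite_U: "finite U"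
    and antitone_insert: "\<And>S e. S \<subseteq> U \<Longrightarrow> e \<in> U \<Longrightarrow> f (insert e S) \<le> f S"
    and supermodular_insert: "\<And>S e d. S \<subseteq> U \<Longrightarrow> e \<in> U - S \<Longrightarrow> d \<in> U - S \<Longrightarrow>
      e \<noteq> d \<Longrightarrow> f (insert d S) - f (insert e (insert d S)) \<le> f S - f (insert e S)"
begin

lemma antitone_union:
  assumes "A \<union> D \<subseteq> U"
  shows "f (A \<union> D) \<le> f A"
proof -
  have "finite D" using assms finite_U by (meson infinite_super le_sup_iff)
  then show ?thesis using assms
  proof (induction D rule: finite_induct)
    case (insert d D)
    then have "f (insert d (A \<union> D)) \<le> f (A \<union> D)" by (intro antitone_insert) auto
    with insert show ?case by simp
  qed simp
qed

lemma marginal_gain_antitone: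
  assumes "A \<union> D \<subseteq> U" "e \<in> U - (A \<union> D)"
  shows "f (A \<union> D) - f (insert e (A \<union> D)) \<le> f A - f (insert e A)"
proof -
  have "finite D" using assms finite_U by (meson infinite_super le_sup_iff)
  then show ?thesis using assms
  proof (induction D rule: finite_induct)
    case (insert d D)
    show ?case
    proof (cases "d \<in> A \<union> D")
      case True
      then have "A \<union> insert d D = A \<union> D" by auto
      with insert show ?thesis by auto
    next
      case False
      with insert have "f (insert d (A \<union> D)) - f (insert e (insert d (A \<union> D)))
          \<le> f (A \<union> D) - f (insert e (A \<union> D))"
        by (intro supermodular_insert) auto
      with insert show ?thesis by simp
    qed
  qed simp
qed

lemma gain_le_sum_marginal_gains:
  assumes "A \<subseteq> U" "B \<subseteq> U"
  shows "f A - f (A \<union> B) \<le> (\<Sum>b\<in>B. f A - f (insert b A))"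
proof -
  have "finite B" using assms finite_U by (meson infinite_super)
  then show ?thesis using assms
  proof (induction B rule: finite_induct)
    case (insert b B)
    have "f (A \<union> B) - f (insert b (A \<union> B)) \<le> f A - f (insert b A)"
    proof (cases "b \<in> A")
      case True
      then show ?thesis by (simp add: insert_absorb)
    next
      case False
      with insert show ?thesis by (intro marginal_gain_antitone) auto
    qed
    with insert show ?case by simp
  qed simp
qed

lemma greedy_run_step:
  assumes run: "greedy_run f U k es" and "i < k" and T: "T \<subseteq> U" "card T \<le> k"
  shows "f (set (take i es)) - f T \<le> k * (f (set (take i es)) - f (set (take (Suc i) es)))"
proof -
  let ?S = "set (take i es)"
  let ?g = "f ?S - f (set (take (Suc i) es))"
  have S: "?S \<subseteq> U" using greedy_run_subset[OF run] by (meson set_take_subset subset_trans)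
  have pick: "es ! i \<in> U - ?S"
    and best: "\<And>e. e \<in> U - ?S \<Longrightarrow> f ?S - f (insert e ?S) \<le> f ?S - f (insert (es ! i) ?S)"
    using run \<open>i < k\<close> unfolding greedy_run_def by auto
  have next_set: "set (take (Suc i) es) = insert (es ! i) ?S"
    by (rule greedy_run_take_Suc[OF run \<open>i < k\<close>])
  have g_nonneg: "0 \<le> ?g" using antitone_insert[OF S] pick next_set by simp
  have each: "f ?S - f (insert b ?S) \<le> ?g" if "b \<in> T" for b
  proof (cases "b \<in> ?S")
    case True
    then show ?thesis using g_nonneg by (simp add: insert_absorb)
  next
    case False
    then show ?thesis using best[of b] T(1) that next_set by auto
  qed
  have "f ?S - f T \<le> f ?S - f (?S \<union> T)"
    using antitone_union[of T ?S] S T(1) by (simp add: Un_commute)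
  also have "\<dots> \<le> (\<Sum>b\<in>T. f ?S - f (insert b ?S))"
    by (rule gain_le_sum_marginal_gains[OF S T(1)])
  also have "\<dots> \<le> (\<Sum>b\<in>T. ?g)" by (intro sum_mono each)
  also have "\<dots> = card T * ?g" by simp
  also have "\<dots> \<le> k * ?g" using T(2) g_nonneg by (intro mult_right_mono) auto
  finally show ?thesis .
qed

theorem greedy_run_approximation:
  assumes run: "greedy_run f U k es" and "0 < k" and T: "T \<subseteq> U" "card T \<le> k"
  shows "card (set es) = k \<and> (1 - 1 / exp 1) * (f {} - f T) \<le> f {} - f (set es)"
proof -
  define a where "a i = f (set (take i es)) - f T" for i
  have "a (Suc i) \<le> (1 - 1 / k) * a i" if "i < k" for i
  proof -
    have "a i \<le> k * (a i - a (Suc i))" using greedy_run_step[OF run that T] by (simp add: a_def)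
    then show ?thesis using \<open>0 < k\<close> by (simp add: field_simps)
  qed
  moreover have "0 \<le> 1 - 1 / real k" using \<open>0 < k\<close> by (simp add: divide_le_eq)
  ultimately have "a k \<le> (1 - 1 / k) ^ k * a 0" by (rule le_power_mult_of_step_le)
  also have "\<dots> \<le> exp (- 1) * a 0"
    using exp_ge_one_minus_x_over_n_power_n[of 1 k] \<open>0 < k\<close> antitone_union[of "{}" T] T(1)
    by (intro mult_right_mono) (simp_all add: a_def)
  finally have "f (set es) - f T \<le> exp (- 1) * (f {} - f T)"
    using run by (simp add: a_def greedy_run_def)
  then have "(1 - 1 / exp 1) * (f {} - f T) \<le> f {} - f (set es)"
    by (simp add: exp_minus inverse_eq_divide algebra_simps)
  moreover have "card (set es) = k"
    using distinct_card[OF greedy_run_distinct[OF run]] run by (simp add: greedy_run_def)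
  ultimately show ?thesis by simp
qed

end

section \<open>The resistance of v as a supermodular set function\<close>

locale ground_edge_augmentation =
  fixes w :: "'n::finite \<Rightarrow> 'n \<Rightarrow> real" and v :: 'n
    and Ev :: "'n set set" and we :: "'n set \<Rightarrow> real"
  assumes weighted_graph: "weighted_graph w" and connected: "connected_graph w"
    and ground_edges: "\<And>e. e \<in> Ev \<Longrightarrow> \<exists>u. u \<noteq> v \<and> e = {u, v}"
    and weights_nonneg: "\<And>e. e \<in> Ev \<Longrightarrow> 0 \<le> we e"
begin

abbreviation augmented_resistance :: "'n set set \<Rightarrow> real" where
  "augmented_resistance S \<equiv> node_resistance (add_edges w we S) v"

abbreviation augmented_inverse :: "'n set set \<Rightarrow> real^'n^'n" where
  "augmented_inverse S \<equiv> matrix_inv (grounded_laplacian (add_edges w we S) v)"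

lemma augmented_weighted_graph: "S \<subseteq> Ev \<Longrightarrow> weighted_graph (add_edges w we S)"
  by (rule weighted_graph_add_edges[OF weighted_graph]) (auto intro: weights_nonneg)

lemma augmented_connected: "S \<subseteq> Ev \<Longrightarrow> connected_graph (add_edges w we S)"
  by (rule connected_graph_add_edges[OF connected]) (auto intro: weights_nonneg)

lemma augmented_weights_nonneg: "S \<subseteq> Ev \<Longrightarrow> \<forall>a b. 0 \<le> add_edges w we S a b"
  using augmented_weighted_graph unfolding weighted_graph_def by simp

lemma augmented_symmetric: "S \<subseteq> Ev \<Longrightarrow> add_edges w we S a b = add_edges w we S b a"
  using augmented_weighted_graph unfolding weighted_graph_def by simp

lemma invertible_augmented: "S \<subseteq> Ev \<Longrightarrow> invertible (grounded_laplacian (add_edges w we S) v)"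
  by (rule invertible_grounded_laplacian[OF augmented_connected augmented_weights_nonneg])

lemma augmented_inverse_nonneg: "S \<subseteq> Ev \<Longrightarrow> 0 \<le> augmented_inverse S $ i $ j"
  by (rule grounded_laplacian_inverse_nonneg[OF augmented_connected augmented_weights_nonneg])

lemma augmented_resistance_eq_trace:
  assumes "S \<subseteq> Ev"
  shows "augmented_resistance S = (\<Sum>u\<in>UNIV - {v}. augmented_inverse S $ u $ u)"
  using node_resistance_eq_grounded_trace augmented_symmetric[OF assms] invertible_augmented[OF assms]
  by blast

lemma augmented_inverse_insert:
  assumes S: "S \<subseteq> Ev" and e: "e \<in> Ev - S" "e = {u, v}" "u \<noteq> v"
  shows "augmented_inverse S $ i $ j - augmented_inverse (insert e S) $ i $ j
           = we e * augmented_inverse S $ i $ u * augmented_inverse (insert e S) $ u $ j"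
proof (rule inverse_diff_diag_unit_update)
  have "insert e S \<subseteq> Ev" using S e by auto
  then show "grounded_laplacian (add_edges w we (insert e S)) v ** augmented_inverse (insert e S)
      = mat 1"
    by (rule matrix_inv_right[OF invertible_augmented])
  show "augmented_inverse S ** grounded_laplacian (add_edges w we S) v = mat 1"
    by (rule matrix_inv_left[OF invertible_augmented[OF S]])
  show "grounded_laplacian (add_edges w we (insert e S)) v
          = grounded_laplacian (add_edges w we S) v + we e *\<^sub>R diag_unit_mat u"
    using e by (simp add: add_edges_insert grounded_laplacian_add_ground_edge)
qed

lemma augmented_inverse_antitone_insert:
  assumes "S \<subseteq> Ev" "e \<in> Ev - S"
  shows "augmented_inverse (insert e S) $ i $ j \<le> augmented_inverse S $ i $ j"
proof -
  obtain u where u: "u \<noteq> v" "e = {u, v}" using ground_edges assms(2) by blast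
  have "insert e S \<subseteq> Ev" using assms by auto
  then have "0 \<le> we e * augmented_inverse S $ i $ u * augmented_inverse (insert e S) $ u $ j"
    using assms weights_nonneg augmented_inverse_nonneg by simp
  then show ?thesis using augmented_inverse_insert[OF assms u(2,1), of i j] by simp
qed

lemma augmented_resistance_gain_insert:
  assumes S: "S \<subseteq> Ev" and e: "e \<in> Ev - S" "e = {u, v}" "u \<noteq> v"
  shows "augmented_resistance S - augmented_resistance (insert e S)
           = (\<Sum>i\<in>UNIV - {v}.
                we e * augmented_inverse S $ i $ u * augmented_inverse (insert e S) $ u $ i)"
proof -
  have "insert e S \<subseteq> Ev" using S e by auto
  then show ?thesis
    by (simp add: augmented_resistance_eq_trace S sum_subtractf[symmetric]
        augmented_inverse_insert[OF S e])
qed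

lemma augmented_resistance_antitone_insert:
  assumes "S \<subseteq> Ev" "e \<in> Ev"
  shows "augmented_resistance (insert e S) \<le> augmented_resistance S"
proof (cases "e \<in> S")
  case False
  obtain u where u: "u \<noteq> v" "e = {u, v}" using ground_edges assms(2) by blast
  have "insert e S \<subseteq> Ev" using assms by auto
  then have "0 \<le> (\<Sum>i\<in>UNIV - {v}.
                    we e * augmented_inverse S $ i $ u * augmented_inverse (insert e S) $ u $ i)"
    using assms weights_nonneg augmented_inverse_nonneg by (simp add: sum_nonneg)
  then show ?thesis using augmented_resistance_gain_insert[OF assms(1) _ u(2,1)] assms False by simp
qed (simp add: insert_absorb)

lemma augmented_resistance_supermodular_insert:
  assumes S: "S \<subseteq> Ev" and e: "e \<in> Ev - S" and d: "d \<in> Ev - S" and "e \<noteq> d"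
  shows "augmented_resistance (insert d S) - augmented_resistance (insert e (insert d S))
           \<le> augmented_resistance S - augmented_resistance (insert e S)"
proof -
  obtain u where u: "u \<noteq> v" "e = {u, v}" using ground_edges e by blast
  have dS: "insert d S \<subseteq> Ev" and eS: "insert e S \<subseteq> Ev" using S e d by auto
  have "e \<in> Ev - insert d S" and "d \<in> Ev - insert e S" using e d \<open>e \<noteq> d\<close> by auto
  have "augmented_inverse (insert d S) $ i $ u * augmented_inverse (insert e (insert d S)) $ u $ i
          \<le> augmented_inverse S $ i $ u * augmented_inverse (insert e S) $ u $ i" for i
  proof (rule mult_mono)
    show "augmented_inverse (insert d S) $ i $ u \<le> augmented_inverse S $ i $ u"
      by (rule augmented_inverse_antitone_insert[OF S d])
    have "augmented_inverse (insert d (insert e S)) $ u $ i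
            \<le> augmented_inverse (insert e S) $ u $ i"
      by (rule augmented_inverse_antitone_insert[OF eS \<open>d \<in> Ev - insert e S\<close>])
    then show "augmented_inverse (insert e (insert d S)) $ u $ i
                 \<le> augmented_inverse (insert e S) $ u $ i"
      by (simp add: insert_commute)
  qed (use S dS \<open>e \<in> Ev - insert d S\<close> augmented_inverse_nonneg in auto)
  then have "(\<Sum>i\<in>UNIV - {v}. we e * augmented_inverse (insert d S) $ i $ u
                                  * augmented_inverse (insert e (insert d S)) $ u $ i)
      \<le> (\<Sum>i\<in>UNIV - {v}. we e * augmented_inverse S $ i $ u * augmented_inverse (insert e S) $ u $ i)"
    using weights_nonneg e by (intro sum_mono) (simp add: mult.assoc mult_left_mono)
  then show ?thesis
    using augmented_resistance_gain_insert[OF S e u(2,1)]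
      augmented_resistance_gain_insert[OF dS \<open>e \<in> Ev - insert d S\<close> u(2,1)] by simp
qed

sublocale decreasing_supermodular Ev augmented_resistance
  by unfold_locales
    (simp_all add: augmented_resistance_antitone_insert augmented_resistance_supermodular_insert)

end

theorem theorem3:
  fixes w :: "'n::finite \<Rightarrow> 'n \<Rightarrow> real"
    and v :: 'n
    and Ev :: "'n set set"
    and we :: "'n set \<Rightarrow> real"
    and k :: nat
    and es :: "'n set list"
    and Sstar :: "'n set set"
  assumes "weighted_graph w"
    and "connected_graph w"
    and "\<forall>e\<in>Ev. \<exists>u. u \<noteq> v \<and> e = {u, v} \<and> e \<notin> edges w"
    and "\<forall>e\<in>Ev. we e > 0"
    and "0 < k" and "k \<le> card Ev"
    and "greedy_run (\<lambda>S. node_resistance (add_edges w we S) v) Ev k es"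
    and "Sstar \<subseteq> Ev" and "card Sstar = k"
    and "\<forall>S'. S' \<subseteq> Ev \<and> card S' = k \<longrightarrow>
           node_resistance (add_edges w we Sstar) v \<le> node_resistance (add_edges w we S') v"
  shows "card (set es) = k \<and>
         node_resistance w v - node_resistance (add_edges w we (set es)) v
           \<ge> (1 - 1 / exp 1) * (node_resistance w v - node_resistance (add_edges w we Sstar) v)"
proof -
  interpret ground_edge_augmentation w v Ev we
    using assms(1-4) by unfold_locales (auto intro: less_imp_le)
  show ?thesis
    using greedy_run_approximation[OF assms(7,5,8)] assms(9) by simp
qed

end
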